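(* Consider Cobb--Douglas exchange economies with $n=2$ agents and $m=2$ commodities in which both agents hold a strictly positive amount of both commodities. Then the incentive ratio over this class of economies is $e^{1/e}$: for every such economy, every agent $i$ with true Cobb--Douglas utility $u_i$ and every Cobb--Douglas misreport $u_i'$, $$\frac{\max_{x'\in\mathcal{E}(u_i')}u_i(x_i')}{\min_{x\in\mathcal{E}(u_i)}u_i(x_i)}\le e^{1/e},$$ and this bound is tight.
   Context: An exchange economy with $n$ agents and $m$ commodities is a tuple $((u_i)_{i=1}^n,(e_i)_{i=1}^n)$, where $u_i:\mathbb{R}_+^m\to\mathbb{R}$ is agent $i$'s utility and $e_i\in\mathbb{R}_+^m$ its endowment; without loss of generality total endowment of each commodity is $1$. Given prices $p$, agent $i$'s demand is the set of maximizers of $u_i(x_i)$ subject to $p\cdot x_i\le p\cdot e_i$, $x_i\ge0$. A competitive equilibrium is a pair $(p,x)$, $p\in\mathbb{R}_+^m$, with markets clearing and each $x_i$ in agent $i$'s demand at $p$. With $u_{-i}$ and $e$ fixed, $\mathcal{E}(\tilde u_i)$ is the set of competitive equilibrium allocations when agent $i$ reports $\tilde u_i$ and all others report truthfully. The incentive ratio of a class of economies is the supremum over economies in the class, agents $i$ and admissible misreports $u_i'$ of $\max_{x'\in\mathcal{E}(u_i')}u_i(x_i')/\min_{x\in\mathcal{E}(u_i)}u_i(x_i)$ (misreported outcomes are evaluated by the true $u_i$). Cobb--Douglas utilities are $u(x)=\prod_{j=1}^m x_j^{\alpha_j}$ with $0\le\alpha_j\le1$, $\sum_j\alpha_j=1$.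 *)

theory Defs
  imports Complex_Main
begin

text \<open>Commodities are indexed by 0..m-1, agents by 0..n-1. A bundle is a function
  nat \<Rightarrow> real that is nonnegative on the commodities and zero elsewhere.\<close>

definition is_bundle :: "nat \<Rightarrow> (nat \<Rightarrow> real) \<Rightarrow> bool" where
  "is_bundle m x \<longleftrightarrow> (\<forall>j<m. 0 \<le> x j) \<and> (\<forall>j. m \<le> j \<longrightarrow> x j = 0)"

definition cd_param :: "nat \<Rightarrow> (nat \<Rightarrow> real) \<Rightarrow> bool" where
  "cd_param m \<alpha> \<longleftrightarrow> (\<forall>j<m. 0 \<le> \<alpha> j \<and> \<alpha> j \<le> 1) \<and> (\<Sum>j<m. \<alpha> j) = 1"

text \<open>Cobb--Douglas utility prod_j x_j^alpha_j, with the convention x^0 = 1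
  (Isabelle's powr has 0 powr 0 = 0, hence the case split).\<close>
definition cd_util :: "nat \<Rightarrow> (nat \<Rightarrow> real) \<Rightarrow> (nat \<Rightarrow> real) \<Rightarrow> real" where
  "cd_util m \<alpha> x = (\<Prod>j<m. if \<alpha> j = 0 then 1 else x j powr \<alpha> j)"

definition cost :: "nat \<Rightarrow> (nat \<Rightarrow> real) \<Rightarrow> (nat \<Rightarrow> real) \<Rightarrow> real" where
  "cost m p x = (\<Sum>j<m. p j * x j)"

definition demand :: "nat \<Rightarrow> ((nat \<Rightarrow> real) \<Rightarrow> real) \<Rightarrow> (nat \<Rightarrow> real) \<Rightarrow> (nat \<Rightarrow> real)
    \<Rightarrow> (nat \<Rightarrow> real) set" where
  "demand m u ei p = {x. is_bundle m x \<and> cost m p x \<le> cost m p ei \<and>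
      (\<forall>y. is_bundle m y \<and> cost m p y \<le> cost m p ei \<longrightarrow> u y \<le> u x)}"

definition comp_eq :: "nat \<Rightarrow> nat \<Rightarrow> (nat \<Rightarrow> (nat \<Rightarrow> real) \<Rightarrow> real) \<Rightarrow> (nat \<Rightarrow> nat \<Rightarrow> real)
    \<Rightarrow> (nat \<Rightarrow> real) \<Rightarrow> (nat \<Rightarrow> nat \<Rightarrow> real) \<Rightarrow> bool" where
  "comp_eq n m u e p x \<longleftrightarrow> is_bundle m p \<and> (\<forall>i. n \<le> i \<longrightarrow> x i = (\<lambda>_. 0)) \<and>
     (\<forall>j<m. (\<Sum>i<n. x i j) = (\<Sum>i<n. e i j)) \<and>
     (\<forall>i<n. x i \<in> demand m (u i) (e i) p)"

definition CE_alloc :: "nat \<Rightarrow> nat \<Rightarrow> (nat \<Rightarrow> (nat \<Rightarrow> real) \<Rightarrow> real) \<Rightarrow> (nat \<Rightarrow> nat \<Rightarrow> real)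
    \<Rightarrow> (nat \<Rightarrow> nat \<Rightarrow> real) set" where
  "CE_alloc n m u e = {x. \<exists>p. comp_eq n m u e p x}"

definition cd_utils :: "nat \<Rightarrow> (nat \<Rightarrow> nat \<Rightarrow> real) \<Rightarrow> nat \<Rightarrow> (nat \<Rightarrow> real) \<Rightarrow> real" where
  "cd_utils m \<alpha> = (\<lambda>k. cd_util m (\<alpha> k))"

definition cd_economy :: "nat \<Rightarrow> nat \<Rightarrow> (nat \<Rightarrow> nat \<Rightarrow> real) \<Rightarrow> (nat \<Rightarrow> nat \<Rightarrow> real) \<Rightarrow> bool" where
  "cd_economy n m \<alpha> e \<longleftrightarrow> (\<forall>i<n. cd_param m (\<alpha> i)) \<and> (\<forall>i<n. \<forall>j<m. 0 < e i j) \<and>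
     (\<forall>j<m. (\<Sum>i<n. e i j) = 1)"

end

theory Submission
  imports Defs
begin

text \<open>With two goods an equilibrium can be computed in closed form. If the agent reports
  weight \<open>b\<close> on good 0 while its partner has weight \<open>g\<close>, equilibrium prices are
  proportional to \<open>(D b, N b)\<close> with \<open>D, N\<close> affine in \<open>b\<close>, and the agent receives
  \<open>(b K / D b, (1 - b) K / N b)\<close> for a wealth \<open>K\<close> independent of \<open>b\<close> (apart from two
  degenerate cases in which a good is free). If the true weight is \<open>a \<le> b\<close>, the misreport
  gains at most a factor \<open>1 / a\<close> in good 0 and nothing in good 1, so the true utility grows
  by at most \<open>(1 / a) powr a \<le> e powr (1 / e)\<close>; the case \<open>b \<le> a\<close> follows by exchanging the
  goods. The bound is approached with \<open>a = 1 / e\<close> against a partner who only wants good 0.\<close>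

lemma cd_util_two:
  "cd_util 2 \<alpha> y = (if \<alpha> 0 = 0 then 1 else y 0 powr \<alpha> 0) * (if \<alpha> 1 = 0 then 1 else y 1 powr \<alpha> 1)"
  by (simp add: cd_util_def numeral_2_eq_2 lessThan_Suc)

lemma cost_two: "cost 2 p y = p 0 * y 0 + p 1 * y 1"
  by (simp add: cost_def numeral_2_eq_2 lessThan_Suc)

lemma cd_param_two: "cd_param 2 \<alpha> \<longleftrightarrow> 0 \<le> \<alpha> 0 \<and> \<alpha> 0 \<le> 1 \<and> \<alpha> 1 = 1 - \<alpha> 0"
  by (auto simp: cd_param_def numeral_2_eq_2 lessThan_Suc less_Suc_eq)

lemma is_bundle_two: "is_bundle 2 y \<longleftrightarrow> 0 \<le> y 0 \<and> 0 \<le> y 1 \<and> (\<forall>j\<ge>2. y j = 0)"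
  by (auto simp: is_bundle_def numeral_2_eq_2 less_Suc_eq)

lemma all_less_two: "(\<forall>i<(2::nat). P i) \<longleftrightarrow> P 0 \<and> P 1"
  by (auto simp: numeral_2_eq_2 less_Suc_eq)

lemma sum_less_two: "(\<Sum>i<(2::nat). f i) = (f 0 + f 1 :: real)"
  by (simp add: numeral_2_eq_2 lessThan_Suc)

lemma demand_two_iff:
  "y \<in> demand 2 u e p \<longleftrightarrow> is_bundle 2 y \<and> p 0 * y 0 + p 1 * y 1 \<le> cost 2 p e \<and>
     (\<forall>z. is_bundle 2 z \<and> p 0 * z 0 + p 1 * z 1 \<le> cost 2 p e \<longrightarrow> u z \<le> u y)"
  unfolding demand_def by (simp add: cost_two[of p y] cost_two[of p "_"] del: cost_two)

lemma demand_two_optimal: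
  "y \<in> demand 2 u e p \<Longrightarrow> is_bundle 2 z \<Longrightarrow> p 0 * z 0 + p 1 * z 1 \<le> cost 2 p e \<Longrightarrow> u z \<le> u y"
  by (simp add: demand_two_iff)

definition bundle_of :: "real \<Rightarrow> real \<Rightarrow> nat \<Rightarrow> real" where
  "bundle_of y0 y1 = (\<lambda>j. if j = 0 then y0 else if j = 1 then y1 else 0)"

lemma bundle_of_simps [simp]:
  "bundle_of y0 y1 0 = y0" "bundle_of y0 y1 1 = y1" "bundle_of y0 y1 (Suc 0) = y1"
  "2 \<le> j \<Longrightarrow> bundle_of y0 y1 j = 0"
  by (auto simp: bundle_of_def)

lemma is_bundle_bundle_of [simp]: "is_bundle 2 (bundle_of y0 y1) \<longleftrightarrow> 0 \<le> y0 \<and> 0 \<le> y1"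
  by (simp add: is_bundle_two)

definition swap2 :: "(nat \<Rightarrow> real) \<Rightarrow> nat \<Rightarrow> real" where
  "swap2 y = bundle_of (y 1) (y 0)"

lemma swap2_simps [simp]: "swap2 y 0 = y 1" "swap2 y 1 = y 0" "swap2 y (Suc 0) = y 0"
  by (simp_all add: swap2_def)

lemma swap2_swap2: "is_bundle 2 y \<Longrightarrow> swap2 (swap2 y) = y"
  by (auto simp: swap2_def bundle_of_def is_bundle_two fun_eq_iff)

lemma cd_param_swap2: "cd_param 2 \<alpha> \<Longrightarrow> cd_param 2 (swap2 \<alpha>)"
  by (simp add: cd_param_two)

lemma cd_util_swap2: "cd_util 2 (swap2 \<alpha>) (swap2 y) = cd_util 2 \<alpha> y"
  by (simp add: cd_util_two)

lemma cost_swap2: "cost 2 (swap2 p) (swap2 y) = cost 2 p y"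
  by (simp add: cost_two)

lemma demand_swap2:
  assumes "y \<in> demand 2 (cd_util 2 \<alpha>) e p"
  shows "swap2 y \<in> demand 2 (cd_util 2 (swap2 \<alpha>)) (swap2 e) (swap2 p)"
  unfolding demand_def
proof (intro CollectI conjI allI impI)
  have y: "is_bundle 2 y" "cost 2 p y \<le> cost 2 p e"
    and opt: "\<And>z. is_bundle 2 z \<Longrightarrow> cost 2 p z \<le> cost 2 p e \<Longrightarrow> cd_util 2 \<alpha> z \<le> cd_util 2 \<alpha> y"
    using assms by (auto simp: demand_def)
  show "is_bundle 2 (swap2 y)" using y(1) by (auto simp: is_bundle_two swap2_def)
  show "cost 2 (swap2 p) (swap2 y) \<le> cost 2 (swap2 p) (swap2 e)"
    using y(2) by (simp only: cost_swap2)
  fix z assume z: "is_bundle 2 z \<and> cost 2 (swap2 p) z \<le> cost 2 (swap2 p) (swap2 e)"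
  then have zz: "swap2 (swap2 z) = z" by (simp add: swap2_swap2)
  have "is_bundle 2 (swap2 z)" using z by (auto simp: is_bundle_two swap2_def)
  moreover have "cost 2 p (swap2 z) \<le> cost 2 p e"
    using z cost_swap2[of p "swap2 z"] cost_swap2[of p e] zz by simp
  ultimately have "cd_util 2 \<alpha> (swap2 z) \<le> cd_util 2 \<alpha> y" by (rule opt)
  then show "cd_util 2 (swap2 \<alpha>) z \<le> cd_util 2 (swap2 \<alpha>) (swap2 y)"
    by (metis cd_util_swap2 zz)
qed

section \<open>Cobb--Douglas demand\<close>

lemma weighted_ln_le_zero:
  fixes a U V :: real
  assumes "0 < a" "a < 1" "0 < U" "0 < V" "a * U + (1 - a) * V \<le> 1"
  shows "a * ln U + (1 - a) * ln V \<le> 0"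
    and "0 \<le> a * ln U + (1 - a) * ln V \<Longrightarrow> U = 1 \<and> V = 1"
proof -
  have gap: "0 \<le> a * (U - 1 - ln U)" "0 \<le> (1 - a) * (V - 1 - ln V)"
    using ln_le_minus_one[of U] ln_le_minus_one[of V] assms by auto
  then show "a * ln U + (1 - a) * ln V \<le> 0"
    using assms(5) by (simp add: algebra_simps)
  assume "0 \<le> a * ln U + (1 - a) * ln V"
  then have "a * (U - 1 - ln U) = 0" "(1 - a) * (V - 1 - ln V) = 0"
    using gap assms(5) by (simp_all add: algebra_simps)
  then show "U = 1 \<and> V = 1"
    using ln_eq_minus_one assms by force
qed

lemma cobb_douglas_budget_max:
  fixes a p0 p1 w z0 z1 :: real
  defines "X0 \<equiv> a * w / p0" and "X1 \<equiv> (1 - a) * w / p1"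
  assumes a: "0 < a" "a < 1" and p: "0 < p0" "0 < p1" "0 < w"
    and z: "0 \<le> z0" "0 \<le> z1" "p0 * z0 + p1 * z1 \<le> w"
  shows "z0 powr a * z1 powr (1 - a) \<le> X0 powr a * X1 powr (1 - a)"
    and "X0 powr a * X1 powr (1 - a) \<le> z0 powr a * z1 powr (1 - a) \<Longrightarrow> z0 = X0 \<and> z1 = X1"
proof -
  have X: "0 < X0" "0 < X1" using a p by (simp_all add: X0_def X1_def)
  have budget: "a * (z0 / X0) + (1 - a) * (z1 / X1) \<le> 1"
  proof -
    have "a * (z0 / X0) + (1 - a) * (z1 / X1) = (p0 * z0 + p1 * z1) / w"
      using a p by (simp add: X0_def X1_def field_simps)
    then show ?thesis using z p by simp
  qed
  have ln_gap: "a * ln (z0 / X0) + (1 - a) * ln (z1 / X1)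
      = ln (z0 powr a * z1 powr (1 - a)) - ln (X0 powr a * X1 powr (1 - a))"
    if "0 < z0" "0 < z1" using that X by (simp add: ln_mult ln_powr ln_div algebra_simps)
  show le: "z0 powr a * z1 powr (1 - a) \<le> X0 powr a * X1 powr (1 - a)"
  proof (cases "z0 = 0 \<or> z1 = 0")
    case True
    then show ?thesis using a by auto
  next
    case False
    then have "0 < z0" "0 < z1" using z by auto
    then show ?thesis
      using weighted_ln_le_zero(1)[OF a _ _ budget] ln_gap X by simp
  qed
  assume ge: "X0 powr a * X1 powr (1 - a) \<le> z0 powr a * z1 powr (1 - a)"
  have "0 < z0 powr a * z1 powr (1 - a)" using ge X by (smt (verit) powr_gt_zero mult_pos_pos)
  then have "0 < z0" "0 < z1" using z by (auto simp: zero_less_mult_iff)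
  then have "z0 / X0 = 1 \<and> z1 / X1 = 1"
    using weighted_ln_le_zero(2)[OF a _ _ budget] ln_gap le ge X by simp
  then show "z0 = X0 \<and> z1 = X1" using X by simp
qed

definition cd_util2 :: "real \<Rightarrow> real \<Rightarrow> real \<Rightarrow> real" where
  "cd_util2 a z0 z1 = (if a = 0 then 1 else z0 powr a) * (if a = 1 then 1 else z1 powr (1 - a))"

lemma cd_util_eq_cd_util2: "cd_param 2 \<alpha> \<Longrightarrow> cd_util 2 \<alpha> z = cd_util2 (\<alpha> 0) (z 0) (z 1)"
  by (simp add: cd_util_two cd_param_two cd_util2_def)

lemma cd_util2_swap: "cd_util2 (1 - a) z1 z0 = cd_util2 a z0 z1"
  by (simp add: cd_util2_def)

lemma cd_util2_interior: "0 < a \<Longrightarrow> a < 1 \<Longrightarrow> cd_util2 a z0 z1 = z0 powr a * z1 powr (1 - a)"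
  by (simp add: cd_util2_def)

lemma cd_util2_zero: "0 \<le> z1 \<Longrightarrow> cd_util2 0 z0 z1 = z1"
  by (simp add: cd_util2_def)

lemma cd_util2_one: "0 \<le> z0 \<Longrightarrow> cd_util2 1 z0 z1 = z0"
  by (simp add: cd_util2_def)

lemma cd_util2_nonneg: "0 \<le> cd_util2 a z0 z1"
  by (simp add: cd_util2_def)

lemma cd_util2_budget_max:
  fixes a p0 p1 w z0 z1 :: real
  defines "X0 \<equiv> a * w / p0" and "X1 \<equiv> (1 - a) * w / p1"
  assumes a: "0 \<le> a" "a \<le> 1" and p: "0 < p0" "0 < p1" "0 < w"
    and z: "0 \<le> z0" "0 \<le> z1" "p0 * z0 + p1 * z1 \<le> w"
  shows "cd_util2 a z0 z1 \<le> cd_util2 a X0 X1"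
    and "cd_util2 a X0 X1 \<le> cd_util2 a z0 z1 \<Longrightarrow> z0 = X0 \<and> z1 = X1"
proof -
  have corner: "z1' \<le> w / p1' \<and> (w / p1' \<le> z1' \<longrightarrow> z0' = 0)"
    if "0 < p0'" "0 < p1'" "0 \<le> z0'" "0 \<le> z1'" "p0' * z0' + p1' * z1' \<le> w"
    for p0' p1' z0' z1' :: real
  proof -
    have "p1' * z1' \<le> w" using that by (smt (verit) mult_nonneg_nonneg)
    moreover have "w \<le> p1' * z1' \<Longrightarrow> p0' * z0' = 0" using that by (smt (verit) mult_nonneg_nonneg)
    ultimately show ?thesis using that by (simp add: field_simps)
  qed
  consider "a = 0" | "a = 1" | "0 < a \<and> a < 1" using a by linarith
  then have "cd_util2 a z0 z1 \<le> cd_util2 a X0 X1 \<and>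
      (cd_util2 a X0 X1 \<le> cd_util2 a z0 z1 \<longrightarrow> z0 = X0 \<and> z1 = X1)"
  proof cases
    case 1
    then show ?thesis using corner[OF p(1,2) z] p by (simp add: cd_util2_zero X0_def X1_def z)
  next
    case 2
    then show ?thesis using corner[OF p(2,1) z(2,1)] z p
      by (simp add: cd_util2_one X0_def X1_def add.commute)
  next
    case 3
    then show ?thesis
      using cobb_douglas_budget_max[OF _ _ p z] by (simp add: cd_util2_interior X0_def X1_def)
  qed
  then show "cd_util2 a z0 z1 \<le> cd_util2 a X0 X1"
    and "cd_util2 a X0 X1 \<le> cd_util2 a z0 z1 \<Longrightarrow> z0 = X0 \<and> z1 = X1" by blast+
qed

lemma cd_demand_positive_prices:
  fixes \<alpha> p e :: "nat \<Rightarrow> real"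
  defines "w \<equiv> cost 2 p e"
  defines "X \<equiv> bundle_of (\<alpha> 0 * w / p 0) ((1 - \<alpha> 0) * w / p 1)"
  assumes \<alpha>: "cd_param 2 \<alpha>" and p: "0 < p 0" "0 < p 1" and w: "0 < w"
  shows "X \<in> demand 2 (cd_util 2 \<alpha>) e p"
    and "y \<in> demand 2 (cd_util 2 \<alpha>) e p \<Longrightarrow> y 0 = X 0 \<and> y 1 = X 1"
proof -
  have a: "0 \<le> \<alpha> 0" "\<alpha> 0 \<le> 1" using \<alpha> by (simp_all add: cd_param_two)
  note max = cd_util2_budget_max[OF a p w]
  show "X \<in> demand 2 (cd_util 2 \<alpha>) e p"
    unfolding demand_two_iff using max(1) a p w
    by (simp add: X_def w_def[symmetric] cd_util_eq_cd_util2[OF \<alpha>] is_bundle_two field_simps)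
  assume "y \<in> demand 2 (cd_util 2 \<alpha>) e p"
  then have "is_bundle 2 y" "p 0 * y 0 + p 1 * y 1 \<le> w" "cd_util 2 \<alpha> X \<le> cd_util 2 \<alpha> y"
    using \<open>X \<in> demand 2 (cd_util 2 \<alpha>) e p\<close> by (auto simp: demand_two_iff w_def)
  then show "y 0 = X 0 \<and> y 1 = X 1"
    using max(2)[of "y 0" "y 1"] by (simp add: X_def cd_util_eq_cd_util2[OF \<alpha>] is_bundle_two)
qed

lemma cd_demand_empty_if_free_good0:
  assumes \<alpha>: "cd_param 2 \<alpha>" "0 < \<alpha> 0" and p: "p 0 = 0" "0 \<le> p 1" and e: "0 < e 1"
  shows "demand 2 (cd_util 2 \<alpha>) e p = {}"
proof (rule ccontr)
  assume "demand 2 (cd_util 2 \<alpha>) e p \<noteq> {}"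
  then obtain y where y: "y \<in> demand 2 (cd_util 2 \<alpha>) e p" by blast
  define c where "c = (if \<alpha> 0 = 1 then 1 else e 1 powr (1 - \<alpha> 0))"
  define u where "u = cd_util 2 \<alpha> y / c + 1"
  have c: "0 < c" using e by (simp add: c_def)
  have u: "0 < u" using c cd_util2_nonneg by (simp add: u_def cd_util_eq_cd_util2[OF \<alpha>(1)] add_nonneg_pos)
  have "cd_util 2 \<alpha> (bundle_of (u powr (1 / \<alpha> 0)) (e 1)) = u * c"
    using \<alpha> u by (simp add: cd_util_eq_cd_util2 cd_util2_def c_def powr_powr)
  also have "\<dots> = cd_util 2 \<alpha> y + c" using c by (simp add: u_def field_simps)
  finally have "cd_util 2 \<alpha> y + c \<le> cd_util 2 \<alpha> y"
    using demand_two_optimal[OF y, of "bundle_of (u powr (1 / \<alpha> 0)) (e 1)"] e p u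
    by (simp add: cost_two)
  then show False using c by simp
qed

lemma cd_demand_free_good0_unwanted:
  assumes \<alpha>: "cd_param 2 \<alpha>" "\<alpha> 0 = 0" and p: "p 0 = 0" "0 < p 1" and e: "0 \<le> e 1"
    and y: "y \<in> demand 2 (cd_util 2 \<alpha>) e p"
  shows "y 1 = e 1"
proof -
  have u: "\<And>z. 0 \<le> z 1 \<Longrightarrow> cd_util 2 \<alpha> z = z 1"
    using \<alpha> by (simp add: cd_util_eq_cd_util2 cd_util2_zero)
  have "is_bundle 2 y" "p 1 * y 1 \<le> p 1 * e 1"
    using y p by (auto simp: demand_two_iff cost_two)
  moreover have "cd_util 2 \<alpha> (bundle_of 0 (e 1)) \<le> cd_util 2 \<alpha> y"
    using demand_two_optimal[OF y] p e by (simp add: cost_two)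
  ultimately show ?thesis using u e p by (simp add: is_bundle_two)
qed

section \<open>Equilibria of two-agent economies\<close>

definition cd_price0 :: "real \<Rightarrow> real \<Rightarrow> real \<Rightarrow> real" where
  "cd_price0 b g t = b * t + g * (1 - t)"

definition cd_price1 :: "real \<Rightarrow> real \<Rightarrow> real \<Rightarrow> real" where
  "cd_price1 b g s = (1 - s) * (1 - g) + s * (1 - b)"

definition cd_wealth :: "real \<Rightarrow> real \<Rightarrow> real \<Rightarrow> real" where
  "cd_wealth g s t = t + g * (s - t)"

text \<open>The equilibrium bundles \<open>(y0, y1)\<close> of an agent with parameter \<open>b\<close> and endowment
  \<open>(s, t)\<close> trading with an agent with parameter \<open>g\<close> and endowment \<open>(1 - s, 1 - t)\<close>.
  Generically the equilibrium prices are proportional to \<open>(cd_price0, cd_price1)\<close>, at which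
  the agent's endowment is worth \<open>cd_wealth\<close> whatever \<open>b\<close> is. In the two degenerate cases
  nobody values one of the goods, its price is zero and its allocation is arbitrary.\<close>
definition eq_bundle :: "real \<Rightarrow> real \<Rightarrow> real \<Rightarrow> real \<Rightarrow> real \<Rightarrow> real \<Rightarrow> bool" where
  "eq_bundle b g s t y0 y1 \<longleftrightarrow>
     (0 < cd_price0 b g t \<and> 0 < cd_price1 b g s \<and>
        y0 = b * cd_wealth g s t / cd_price0 b g t \<and> y1 = (1 - b) * cd_wealth g s t / cd_price1 b g s)
   \<or> (b = 0 \<and> g = 0 \<and> y1 = t \<and> 0 \<le> y0 \<and> y0 \<le> 1)
   \<or> (b = 1 \<and> g = 1 \<and> y0 = s \<and> 0 \<le> y1 \<and> y1 \<le> 1)"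

lemma eq_bundle_swap: "eq_bundle (1 - b) (1 - g) t s y1 y0 \<longleftrightarrow> eq_bundle b g s t y0 y1"
proof -
  have "cd_price0 (1 - b) (1 - g) s = cd_price1 b g s" "cd_price1 (1 - b) (1 - g) t = cd_price0 b g t"
    "cd_wealth (1 - g) t s = cd_wealth g s t"
    by (simp_all add: cd_price0_def cd_price1_def cd_wealth_def algebra_simps)
  then show ?thesis by (auto simp: eq_bundle_def)
qed

lemma cd_wealth_pos:
  assumes g: "0 \<le> g" "g \<le> 1" and st: "0 < s" "0 < t"
  shows "0 < cd_wealth g s t"
proof -
  have "cd_wealth g s t = t * (1 - g) + g * s" by (simp add: cd_wealth_def algebra_simps)
  moreover have "0 < t * (1 - g) \<or> 0 < g * s" using g st by (cases "g = 1") auto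
  ultimately show ?thesis using g st by (smt (verit) mult_nonneg_nonneg)
qed

lemma eq_bundle_nonneg:
  assumes "eq_bundle b g s t y0 y1" "0 \<le> b" "b \<le> 1" "0 \<le> g" "g \<le> 1" "0 < s" "0 < t"
  shows "0 \<le> y0" "0 \<le> y1"
  using assms cd_wealth_pos[of g s t] by (auto simp: eq_bundle_def)

text \<open>The market for good 0 clears, so by Walras' law the agents' budgets determine the
  relative price \<open>p1 / p0 = cd_price1 / cd_price0\<close>.\<close>
lemma eq_bundle_of_positive_prices:
  fixes b g s t p0 p1 :: real
  defines "wi \<equiv> p0 * s + p1 * t" and "wk \<equiv> p0 * (1 - s) + p1 * (1 - t)"
  assumes b: "0 \<le> b" "b \<le> 1" and g: "0 \<le> g" "g \<le> 1" and st: "0 < s" "s < 1" "0 < t" "t < 1"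
    and p: "0 < p0" "0 < p1" and clear: "b * wi / p0 + g * wk / p0 = 1"
  shows "eq_bundle b g s t (b * wi / p0) ((1 - b) * wi / p1)"
proof -
  define D where "D = cd_price0 b g t"
  define N where "N = cd_price1 b g s"
  define K where "K = cd_wealth g s t"
  have "b * wi + g * wk = p0" using clear p by (simp add: field_simps)
  then have prices: "p1 * D = p0 * N"
    by (simp add: D_def N_def wi_def wk_def cd_price0_def cd_price1_def algebra_simps)
  have D: "0 < D"
  proof (rule ccontr)
    assume "\<not> 0 < D"
    moreover have "0 \<le> b * t" "0 \<le> g * (1 - t)" using b g st by auto
    ultimately have "b * t = 0" "g * (1 - t) = 0" unfolding D_def cd_price0_def by linarith+
    then have "b = 0" "g = 0" using st by auto
    then show False using prices p by (simp add: D_def N_def cd_price0_def cd_price1_def)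
  qed
  have "0 < p0 * N" using prices D p by (metis mult_pos_pos)
  then have N: "0 < N" using p by (simp add: zero_less_mult_iff)
  have K: "K = s * D + t * N"
    by (simp add: K_def D_def N_def cd_wealth_def cd_price0_def cd_price1_def algebra_simps)
  have "wi * D = p0 * K" "wi * N = p1 * K"
    using prices unfolding K wi_def by (simp_all add: algebra_simps)
  then have "b * wi / p0 = b * K / D" "(1 - b) * wi / p1 = (1 - b) * K / N"
    using p D N by (simp_all add: field_simps)
  then show ?thesis using D N by (simp add: eq_bundle_def D_def N_def K_def)
qed

lemma eq_bundle_of_free_good0:
  assumes \<beta>: "cd_param 2 \<beta>" and \<gamma>: "cd_param 2 \<gamma>" and p: "is_bundle 2 p" "p 0 = 0"
    and y: "y \<in> demand 2 (cd_util 2 \<beta>) ei p" and z: "z \<in> demand 2 (cd_util 2 \<gamma>) ek p"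
    and e: "0 < ei 0" "0 < ei 1" "0 < ek 1" and clear: "y 0 + z 0 = 1"
  shows "eq_bundle (\<beta> 0) (\<gamma> 0) (ei 0) (ei 1) (y 0) (y 1)"
proof -
  have "0 \<le> p 1" using p(1) by (simp add: is_bundle_two)
  then have "\<not> 0 < \<beta> 0" "\<not> 0 < \<gamma> 0"
    using cd_demand_empty_if_free_good0[of \<beta> p ei] cd_demand_empty_if_free_good0[of \<gamma> p ek]
      \<beta> \<gamma> y z e p(2) by auto
  then have b: "\<beta> 0 = 0" and g: "\<gamma> 0 = 0" using \<beta> \<gamma> by (auto simp: cd_param_two)
  have p1: "0 < p 1"
  proof (rule ccontr)
    assume "\<not> 0 < p 1"
    then have "p 1 = 0" using p(1) by (simp add: is_bundle_two)
    then have "demand 2 (cd_util 2 (swap2 \<beta>)) (swap2 ei) (swap2 p) = {}"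
      using \<beta> b p e by (intro cd_demand_empty_if_free_good0 cd_param_swap2) (auto simp: cd_param_two)
    then show False using demand_swap2[OF y] by blast
  qed
  have "y 1 = ei 1" using cd_demand_free_good0_unwanted[OF \<beta> b p(2) p1 _ y] e by simp
  moreover have "0 \<le> y 0" "0 \<le> z 0" using y z by (auto simp: demand_two_iff is_bundle_two)
  ultimately show ?thesis using b g clear by (auto simp: eq_bundle_def)
qed

lemma eq_bundle_of_demands:
  assumes \<beta>: "cd_param 2 \<beta>" and \<gamma>: "cd_param 2 \<gamma>" and p: "is_bundle 2 p"
    and y: "y \<in> demand 2 (cd_util 2 \<beta>) ei p" and z: "z \<in> demand 2 (cd_util 2 \<gamma>) ek p"
    and e: "0 < ei 0" "0 < ei 1" "0 < ek 0" "0 < ek 1" "ei 0 + ek 0 = 1" "ei 1 + ek 1 = 1"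
    and clear: "y 0 + z 0 = 1" "y 1 + z 1 = 1"
  shows "eq_bundle (\<beta> 0) (\<gamma> 0) (ei 0) (ei 1) (y 0) (y 1)"
proof -
  have b: "0 \<le> \<beta> 0" "\<beta> 0 \<le> 1" and g: "0 \<le> \<gamma> 0" "\<gamma> 0 \<le> 1"
    using \<beta> \<gamma> by (auto simp: cd_param_two)
  consider "0 < p 0" "0 < p 1" | "p 0 = 0" | "p 1 = 0"
    using p by (force simp: is_bundle_two)
  then show ?thesis
  proof cases
    case 1
    define wi where "wi = p 0 * ei 0 + p 1 * ei 1"
    define wk where "wk = p 0 * (1 - ei 0) + p 1 * (1 - ei 1)"
    have "ek 0 = 1 - ei 0" "ek 1 = 1 - ei 1" using e by simp_all
    then have w: "cost 2 p ei = wi" "cost 2 p ek = wk" "0 < wi" "0 < wk"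
      using 1 e by (auto simp: cost_two wi_def wk_def add_pos_pos)
    have "y 0 = \<beta> 0 * wi / p 0" "y 1 = (1 - \<beta> 0) * wi / p 1" "z 0 = \<gamma> 0 * wk / p 0"
      using cd_demand_positive_prices(2)[OF \<beta> 1, of ei y] cd_demand_positive_prices(2)[OF \<gamma> 1, of ek z]
        y z w by auto
    then show ?thesis
      using eq_bundle_of_positive_prices[OF b g _ _ _ _ 1, of "ei 0" "ei 1"] e clear(1)
      by (simp add: wi_def wk_def)
  next
    case 2
    then show ?thesis using eq_bundle_of_free_good0[OF \<beta> \<gamma> p 2 y z] e clear by simp
  next
    case 3
    have "eq_bundle (swap2 \<beta> 0) (swap2 \<gamma> 0) (swap2 ei 0) (swap2 ei 1) (swap2 y 0) (swap2 y 1)"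
      using 3 p e clear
      by (intro eq_bundle_of_free_good0[OF cd_param_swap2[OF \<beta>] cd_param_swap2[OF \<gamma>] _ _
            demand_swap2[OF y] demand_swap2[OF z]]) (auto simp: is_bundle_two swap2_def)
    then show ?thesis using \<beta> \<gamma> eq_bundle_swap by (simp add: cd_param_two)
  qed
qed

lemma eq_bundle_of_comp_eq:
  assumes ce: "comp_eq 2 2 u e p x" and i: "i < 2"
    and ui: "u i = cd_util 2 \<beta>" and uk: "u (1 - i) = cd_util 2 \<gamma>"
    and \<beta>: "cd_param 2 \<beta>" and \<gamma>: "cd_param 2 \<gamma>"
    and e_pos: "\<forall>i<2. \<forall>j<2. 0 < e i j" and e_sum: "\<forall>j<2. (\<Sum>i<2. e i j) = 1"
  shows "eq_bundle (\<beta> 0) (\<gamma> 0) (e i 0) (e i 1) (x i 0) (x i 1)"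
proof -
  define k where "k = 1 - i"
  have k: "k < 2" "k \<noteq> i" using i unfolding k_def by presburger+
  have sum_ik: "(\<Sum>l<2. f l) = f i + f k" for f :: "nat \<Rightarrow> real"
    using i by (auto simp: sum_less_two k_def less_Suc_eq numeral_2_eq_2)
  have "x i j + x k j = 1" "e i j + e k j = 1" if "j < 2" for j
    using ce e_sum that by (auto simp: comp_eq_def sum_ik)
  moreover have "is_bundle 2 p" "x i \<in> demand 2 (cd_util 2 \<beta>) (e i) p"
    "x k \<in> demand 2 (cd_util 2 \<gamma>) (e k) p"
    using ce i k ui uk by (auto simp: comp_eq_def k_def)
  ultimately show ?thesis
    using eq_bundle_of_demands[OF \<beta> \<gamma>, of p "x i" "e i" "x k" "e k"] e_pos i k by simp
qed

section \<open>The gain from misreporting\<close>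

lemma cd_price0_scaled_le:
  assumes "a \<le> 1" "0 \<le> b" "b \<le> 1" "0 \<le> g" "0 \<le> t" "t \<le> 1"
  shows "b * cd_price0 a g t \<le> cd_price0 b g t"
proof -
  from assms have "0 \<le> b * t * (1 - a) + g * (1 - t) * (1 - b)" by simp
  then show ?thesis by (simp add: cd_price0_def algebra_simps)
qed

lemma cd_price1_mono:
  assumes "a \<le> b" "g \<le> 1" "s \<le> 1"
  shows "(1 - b) * cd_price1 a g s \<le> (1 - a) * cd_price1 b g s"
proof -
  from assms have "0 \<le> (b - a) * ((1 - s) * (1 - g))" by simp
  then show ?thesis by (simp add: cd_price1_def algebra_simps)
qed

lemma scaled_fraction_le:
  fixes n1 n2 d1 d2 k :: real
  assumes "0 < d1" "0 < d2" "0 \<le> k" "n1 * d2 \<le> n2 * d1"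
  shows "n1 * k / d1 \<le> n2 * k / d2"
proof -
  have "n1 * d2 * k \<le> n2 * d1 * k" using assms by (intro mult_right_mono) auto
  then show ?thesis using assms by (simp add: divide_simps algebra_simps)
qed

context
  fixes a b g s t :: real
  assumes a: "0 \<le> a" "a \<le> 1" and b: "0 \<le> b" "b \<le> 1" and g: "0 \<le> g" "g \<le> 1"
    and s: "0 < s" "s < 1" and t: "0 < t" "t < 1"
begin

lemma eq_bundle_good0_bound:
  assumes x: "eq_bundle a g s t x0 x1" and y: "eq_bundle b g s t y0 y1"
  shows "a * y0 \<le> x0"
proof -
  define K where "K = cd_wealth g s t"
  have K: "0 < K" using cd_wealth_pos g s t by (simp add: K_def)
  have y0: "0 \<le> y0" using eq_bundle_nonneg(1)[OF y] b g s t by simp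
  have x0: "0 \<le> x0" using eq_bundle_nonneg(1)[OF x] a g s t by simp
  from x consider
      "0 < cd_price0 a g t" "x0 = a * K / cd_price0 a g t"
    | "a = 0" | "a = 1" "g = 1" "x0 = s"
    by (auto simp: eq_bundle_def K_def)
  then show ?thesis
  proof cases
    case x_int: 1
    from y consider
        "0 < cd_price0 b g t" "y0 = b * K / cd_price0 b g t"
      | "b = 0" "g = 0" "y0 \<le> 1" | "b = 1" "g = 1" "y0 = s"
      by (auto simp: eq_bundle_def K_def)
    then show ?thesis
    proof cases
      case 1
      have "(a * b) * cd_price0 a g t \<le> a * cd_price0 b g t"
        using cd_price0_scaled_le[of a b g t] a b g t by (simp add: mult_left_mono mult.assoc)
      then have "(a * b) * K / cd_price0 b g t \<le> a * K / cd_price0 a g t"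
        using scaled_fraction_le[OF 1(1) x_int(1) less_imp_le[OF K]] by simp
      then show ?thesis using 1 x_int by (simp add: mult.assoc)
    next
      case 2
      then have "x0 = 1" using x_int t by (auto simp: K_def cd_wealth_def cd_price0_def)
      then show ?thesis using 2 a y0 by (simp add: mult_le_one)
    next
      case 3
      have "cd_price0 a g t \<le> 1" using cd_price0_scaled_le[of a 1 g t] a g t 3 by (simp add: cd_price0_def)
      then have "a * s * cd_price0 a g t \<le> a * s" using a s by (simp add: mult_left_le)
      then show ?thesis using 3 x_int by (simp add: K_def cd_wealth_def le_divide_eq)
    qed
  next
    case 2
    then show ?thesis using x0 by simp
  next
    case x_deg: 3
    have "y0 \<le> s"
    proof (cases "0 < cd_price0 b g t")
      case True
      have "b * cd_price0 1 g t \<le> cd_price0 b g t" using cd_price0_scaled_le[of 1 b g t] b g t by simp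
      then have "b * s \<le> s * cd_price0 b g t"
        using x_deg s by (simp add: cd_price0_def mult.commute mult_left_mono)
      moreover have "y0 = b * s / cd_price0 b g t"
        using y x_deg True by (auto simp: eq_bundle_def cd_wealth_def cd_price0_def)
      ultimately show ?thesis using True by (simp add: divide_le_eq)
    next
      case False
      then show ?thesis using y x_deg t by (auto simp: eq_bundle_def cd_price0_def)
    qed
    then show ?thesis using x_deg by simp
  qed
qed

lemma eq_bundle_good1_mono:
  assumes x: "eq_bundle a g s t x0 x1" and y: "eq_bundle b g s t y0 y1" and ab: "a \<le> b" "a < 1"
  shows "y1 \<le> x1"
proof -
  define K where "K = cd_wealth g s t"
  have K: "0 < K" using cd_wealth_pos g s t by (simp add: K_def)
  from x ab consider
      "0 < cd_price0 a g t" "0 < cd_price1 a g s" "x1 = (1 - a) * K / cd_price1 a g s"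
    | "a = 0" "g = 0" "x1 = t"
    by (auto simp: eq_bundle_def K_def)
  then show ?thesis
  proof cases
    case x_int: 1
    from y consider
        "0 < cd_price1 b g s" "y1 = (1 - b) * K / cd_price1 b g s"
      | "b = 0" "g = 0" | "b = 1" "g = 1" "y1 \<le> 1"
      by (auto simp: eq_bundle_def K_def)
    then show ?thesis
    proof cases
      case 1
      then show ?thesis
        using scaled_fraction_le[OF 1(1) x_int(2) less_imp_le[OF K] cd_price1_mono] ab g s x_int by simp
    next
      case 2
      then show ?thesis using x_int ab a by (simp add: cd_price0_def)
    next
      case 3
      then have "x1 = 1" using x_int s ab by (simp add: K_def cd_wealth_def cd_price1_def)
      then show ?thesis using 3 by simp
    qed
  next
    case x_deg: 2
    have "y1 \<le> t"
    proof (cases "0 < cd_price1 b g s")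
      case True
      have "(1 - b) * cd_price1 0 0 s \<le> cd_price1 b 0 s" using cd_price1_mono[of 0 b 0 s] b s by simp
      then have "(1 - b) * t \<le> t * cd_price1 b 0 s"
        using t by (simp add: cd_price1_def mult.commute mult_left_mono)
      moreover have "y1 = (1 - b) * t / cd_price1 b g s"
        using y x_deg True by (auto simp: eq_bundle_def cd_wealth_def cd_price1_def)
      ultimately show ?thesis using True x_deg by (simp add: divide_le_eq)
    next
      case False
      then show ?thesis using y x_deg s by (auto simp: eq_bundle_def cd_price1_def)
    qed
    then show ?thesis using x_deg by simp
  qed
qed

end

lemma inv_powr_self_le_exp_inv_e:
  fixes c :: real
  assumes "0 < c"
  shows "(1 / c) powr c \<le> exp (1 / exp 1)"
proof -
  have "ln (1 / c) - 1 = ln (1 / (c * exp 1))" using assms by (simp add: ln_div ln_mult)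
  also have "\<dots> \<le> 1 / (c * exp 1) - 1" using assms by (intro ln_le_minus_one) auto
  finally have "c * ln (1 / c) \<le> c * (1 / (c * exp 1))" using assms by (intro mult_left_mono) auto
  then show ?thesis using assms by (simp add: powr_def)
qed

lemma cd_util2_le_exp_inv_e:
  fixes a x0 x1 y0 y1 :: real
  assumes a: "0 \<le> a" "a \<le> 1" and nonneg: "0 \<le> x0" "0 \<le> x1" "0 \<le> y0" "0 \<le> y1"
    and good0: "a * y0 \<le> x0" and good1: "a < 1 \<Longrightarrow> y1 \<le> x1"
  shows "cd_util2 a y0 y1 \<le> exp (1 / exp 1) * cd_util2 a x0 x1"
proof -
  have E: "1 \<le> exp (1 / exp 1 :: real)" by simp
  consider "a = 0" | "a = 1" | "0 < a" "a < 1" using a by linarith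
  then have "cd_util2 a y0 y1 \<le> cd_util2 a x0 x1 \<or>
      cd_util2 a y0 y1 \<le> (1 / a) powr a * cd_util2 a x0 x1 \<and> 0 < a"
  proof cases
    case 1
    then show ?thesis using good1 nonneg by (simp add: cd_util2_zero)
  next
    case 2
    then show ?thesis using good0 nonneg by (simp add: cd_util2_one)
  next
    case 3
    have "y0 powr a \<le> (x0 / a) powr a" using 3 nonneg good0 by (intro powr_mono2) (auto simp: field_simps)
    also have "\<dots> = (1 / a) powr a * x0 powr a" using 3 nonneg by (simp add: powr_divide)
    finally have "y0 powr a * y1 powr (1 - a) \<le> ((1 / a) powr a * x0 powr a) * x1 powr (1 - a)"
      using 3 nonneg good1 by (intro mult_mono powr_mono2) auto
    then show ?thesis using 3 by (simp add: cd_util2_interior mult.assoc)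
  qed
  then show ?thesis
    using inv_powr_self_le_exp_inv_e[of a] E cd_util2_nonneg[of a x0 x1]
    by (smt (verit) mult_right_mono mult_le_cancel_right1)
qed

lemma eq_bundle_gain_le_if_le:
  assumes a: "0 \<le> a" "a \<le> b" and b: "b \<le> 1" and g: "0 \<le> g" "g \<le> 1"
    and s: "0 < s" "s < 1" and t: "0 < t" "t < 1"
    and x: "eq_bundle a g s t x0 x1" and y: "eq_bundle b g s t y0 y1"
  shows "cd_util2 a y0 y1 \<le> exp (1 / exp 1) * cd_util2 a x0 x1"
proof (rule cd_util2_le_exp_inv_e)
  show "a * y0 \<le> x0" by (rule eq_bundle_good0_bound[OF _ _ _ _ g s t x y]) (use a b in auto)
  show "y1 \<le> x1" if "a < 1" by (rule eq_bundle_good1_mono[OF _ _ _ _ g s t x y]) (use a b that in auto)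
  show "0 \<le> x0" "0 \<le> x1" using eq_bundle_nonneg[OF x] a b g s t by auto
  show "0 \<le> y0" "0 \<le> y1" using eq_bundle_nonneg[OF y] a b g s t by auto
qed (use a b in auto)

lemma eq_bundle_gain_le:
  assumes a: "0 \<le> a" "a \<le> 1" and b: "0 \<le> b" "b \<le> 1" and g: "0 \<le> g" "g \<le> 1"
    and s: "0 < s" "s < 1" and t: "0 < t" "t < 1"
    and x: "eq_bundle a g s t x0 x1" and y: "eq_bundle b g s t y0 y1"
  shows "cd_util2 a y0 y1 \<le> exp (1 / exp 1) * cd_util2 a x0 x1"
proof (cases "a \<le> b")
  case True
  then show ?thesis using eq_bundle_gain_le_if_le a b g s t x y by blast
next
  case False
  have "cd_util2 (1 - a) y1 y0 \<le> exp (1 / exp 1) * cd_util2 (1 - a) x1 x0"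
    using False a b g s t x y
    by (intro eq_bundle_gain_le_if_le[of "1 - a" "1 - b" "1 - g" t s]) (auto simp: eq_bundle_swap)
  then show ?thesis by (simp add: cd_util2_swap)
qed

lemma incentive_ratio_le:
  assumes econ: "cd_economy 2 2 \<alpha> e" and i: "i < 2" and \<beta>: "cd_param 2 \<beta>"
    and x': "x' \<in> CE_alloc 2 2 ((cd_utils 2 \<alpha>)(i := cd_util 2 \<beta>)) e"
    and x: "x \<in> CE_alloc 2 2 (cd_utils 2 \<alpha>) e"
  shows "cd_util 2 (\<alpha> i) (x' i) \<le> exp (1 / exp 1) * cd_util 2 (\<alpha> i) (x i)"
proof -
  define k where "k = 1 - i"
  have k: "k < 2" "k \<noteq> i" using i unfolding k_def by presburger+
  have \<alpha>i: "cd_param 2 (\<alpha> i)" and \<alpha>k: "cd_param 2 (\<alpha> k)"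
    and e_pos: "\<forall>i<2. \<forall>j<2. 0 < e i j" and e_sum: "\<forall>j<2. (\<Sum>i<2. e i j) = 1"
    using econ i k by (auto simp: cd_economy_def)
  obtain p' where p': "comp_eq 2 2 ((cd_utils 2 \<alpha>)(i := cd_util 2 \<beta>)) e p' x'"
    using x' by (auto simp: CE_alloc_def)
  obtain p where p: "comp_eq 2 2 (cd_utils 2 \<alpha>) e p x"
    using x by (auto simp: CE_alloc_def)
  have y: "eq_bundle (\<beta> 0) (\<alpha> k 0) (e i 0) (e i 1) (x' i 0) (x' i 1)"
    using eq_bundle_of_comp_eq[OF p' i _ _ \<beta> \<alpha>k e_pos e_sum] k by (simp add: k_def cd_utils_def)
  have x: "eq_bundle (\<alpha> i 0) (\<alpha> k 0) (e i 0) (e i 1) (x i 0) (x i 1)"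
    using eq_bundle_of_comp_eq[OF p i _ _ \<alpha>i \<alpha>k e_pos e_sum] by (simp add: k_def cd_utils_def)
  have "e i j + e k j = 1 \<and> 0 < e i j \<and> 0 < e k j" if "j < 2" for j
    using e_sum e_pos i k that by (auto simp: sum_less_two k_def less_Suc_eq numeral_2_eq_2)
  from this[of 0] this[of 1] have "0 < e i 0" "e i 0 < 1" "0 < e i 1" "e i 1 < 1" by auto
  then show ?thesis
    using eq_bundle_gain_le[OF _ _ _ _ _ _ _ _ _ _ x y] \<alpha>i \<alpha>k \<beta>
    by (simp add: cd_param_two cd_util_eq_cd_util2)
qed

section \<open>Tightness\<close>

lemma exp_inv_e_approx:
  fixes c :: real
  assumes "c < exp (1 / exp 1)"
  shows "\<exists>t. 0 < t \<and> t < 1 \<and> c < (exp 1 - (exp 1 - 1) * t) powr (1 / exp 1)"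
proof (cases "c \<le> 0")
  case True
  have "0 < exp 1 - (exp 1 - 1) * (1/2::real)" by (simp add: algebra_simps add_pos_pos)
  then have "c < (exp 1 - (exp 1 - 1) * (1/2::real)) powr (1 / exp 1)"
    using True by (smt (verit) powr_gt_zero)
  then show ?thesis by (intro exI[of _ "1/2"]) auto
next
  case False
  define E where "E = exp (1::real)"
  have E: "1 < E" "2 \<le> E" using exp_ge_add_one_self[of "1::real"] by (simp_all add: E_def)
  define L where "L = c powr E"
  have L: "0 < L" using False by (simp add: L_def)
  have "c powr E < exp (1 / E) powr E" using False assms E by (intro powr_less_mono2) (auto simp: E_def)
  also have "exp (1 / E) powr E = E" using E by (simp add: powr_def E_def)
  finally have LE: "L < E" by (simp add: L_def)
  define t where "t = (E - L) / (2 * (E - 1))"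
  have t: "0 < t" "t < 1" using LE E L by (simp_all add: t_def field_simps)
  have "E - (E - 1) * t = (E + L) / 2" using E by (simp add: t_def field_simps)
  then have "L < E - (E - 1) * t" using LE by simp
  then have "L powr (1 / E) < (E - (E - 1) * t) powr (1 / E)" using L E by (intro powr_less_mono2) auto
  moreover have "c = L powr (1 / E)" using False E by (simp add: L_def powr_powr)
  ultimately show ?thesis using t by (auto simp: E_def)
qed

lemma example_equilibrium_exists:
  fixes a t :: real
  defines "\<alpha> \<equiv> \<lambda>l::nat. if l = 0 then bundle_of a (1 - a) else bundle_of 1 0"
    and "e \<equiv> \<lambda>l::nat. if l = 0 then bundle_of (1/2) t else bundle_of (1/2) (1 - t)"
  assumes a: "0 < a" "a < 1" and t: "0 < t" "t < 1"
  shows "CE_alloc 2 2 (cd_utils 2 \<alpha>) e \<noteq> {}"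
proof -
  have \<alpha>0: "cd_param 2 (bundle_of a (1 - a))" and \<alpha>1: "cd_param 2 (bundle_of 1 0)"
    using a by (simp_all add: cd_param_two)
  have e_sum: "\<forall>j<2. (\<Sum>i<2. e i j) = 1" by (simp add: all_less_two sum_less_two e_def)
  define D where "D = a * t + (1 - t)"
  have D: "0 < D" using a t by (simp add: D_def add_pos_pos)
  define r where "r = (1 - a) / (2 * D)"
  have r: "0 < r" using a D by (simp add: r_def)
  define w0 where "w0 = 1/2 + r * t"
  define w1 where "w1 = 1/2 + r * (1 - t)"
  have w: "0 < w0" "0 < w1" "cost 2 (bundle_of 1 r) (e 0) = w0" "cost 2 (bundle_of 1 r) (e 1) = w1"
    using r t by (simp_all add: w0_def w1_def cost_two e_def add_pos_nonneg)
  have "2 * r * D = 1 - a" using D by (simp add: r_def)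
  then have clear: "(1 - a) * w0 = r" "a * w0 + w1 = 1"
    by (simp_all add: w0_def w1_def D_def field_simps)
  define x_eq where "x_eq = (\<lambda>l::nat. if l = 0 then bundle_of (a * w0) ((1 - a) * w0 / r)
      else if l = 1 then bundle_of w1 0 else (\<lambda>_. 0))"
  have "x_eq 0 \<in> demand 2 (cd_util 2 (\<alpha> 0)) (e 0) (bundle_of 1 r)"
    using cd_demand_positive_prices(1)[OF \<alpha>0, of "bundle_of 1 r" "e 0"] r w by (simp add: x_eq_def \<alpha>_def)
  moreover have "x_eq 1 \<in> demand 2 (cd_util 2 (\<alpha> 1)) (e 1) (bundle_of 1 r)"
    using cd_demand_positive_prices(1)[OF \<alpha>1, of "bundle_of 1 r" "e 1"] r w by (simp add: x_eq_def \<alpha>_def)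
  ultimately have "comp_eq 2 2 (cd_utils 2 \<alpha>) e (bundle_of 1 r) x_eq"
    unfolding comp_eq_def using r clear e_sum
    by (auto simp: all_less_two sum_less_two x_eq_def cd_utils_def)
  then show "CE_alloc 2 2 (cd_utils 2 \<alpha>) e \<noteq> {}" by (auto simp: CE_alloc_def)
qed

text \<open>Agent 1 values only good 0. By claiming to value only good 0 as well, agent 0 makes
  good 1 free: it keeps its half of good 0 and takes the whole supply of good 1. Truthfully
  it has to give up good 0 to get good 1, and with weight \<open>1 / e\<close> on good 0 the ratio of
  its utilities is \<open>(e - (e - 1) t) powr (1 / e)\<close>, which tends to \<open>e powr (1 / e)\<close> as \<open>t \<rightarrow> 0\<close>.\<close>
lemma misreport_gain_example:
  fixes t :: real
  defines "a \<equiv> 1 / exp 1"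
  defines "\<alpha> \<equiv> \<lambda>l::nat. if l = 0 then bundle_of a (1 - a) else bundle_of 1 0"
    and "e \<equiv> \<lambda>l::nat. if l = 0 then bundle_of (1/2) t else bundle_of (1/2) (1 - t)"
    and "x' \<equiv> \<lambda>l::nat. if l = 0 then bundle_of (1/2) 1 else if l = 1 then bundle_of (1/2) 0 else (\<lambda>_. 0)"
  assumes t: "0 < t" "t < 1"
  shows "cd_economy 2 2 \<alpha> e"
    and "x' \<in> CE_alloc 2 2 ((cd_utils 2 \<alpha>)(0 := cd_util 2 (bundle_of 1 0))) e"
    and "CE_alloc 2 2 (cd_utils 2 \<alpha>) e \<noteq> {}"
    and "x \<in> CE_alloc 2 2 (cd_utils 2 \<alpha>) e \<Longrightarrow> 0 < cd_util 2 (\<alpha> 0) (x 0) \<and>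
      cd_util 2 (\<alpha> 0) (x' 0) = (exp 1 - (exp 1 - 1) * t) powr (1 / exp 1) * cd_util 2 (\<alpha> 0) (x 0)"
proof -
  have a: "0 < a" "a < 1" by (simp_all add: a_def)
  have \<alpha>0: "cd_param 2 (bundle_of a (1 - a))" and \<alpha>1: "cd_param 2 (bundle_of 1 0)"
    using a by (simp_all add: cd_param_two)
  have e_pos: "\<forall>i<2. \<forall>j<2. 0 < e i j" and e_sum: "\<forall>j<2. (\<Sum>i<2. e i j) = 1"
    using t by (auto simp: all_less_two sum_less_two e_def)
  show "cd_economy 2 2 \<alpha> e"
    unfolding cd_economy_def using e_pos e_sum \<alpha>0 \<alpha>1 by (auto simp: all_less_two \<alpha>_def)
  have good0_only: "bundle_of (ei 0) y1 \<in> demand 2 (cd_util 2 (bundle_of 1 0)) ei (bundle_of 1 0)"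
    if "0 \<le> ei 0" "0 \<le> y1" for ei y1
    using that by (auto simp: demand_two_iff cost_two cd_util_two is_bundle_two)
  have "comp_eq 2 2 ((cd_utils 2 \<alpha>)(0 := cd_util 2 (bundle_of 1 0))) e (bundle_of 1 0) x'"
    unfolding comp_eq_def using good0_only[of "e 0" 1] good0_only[of "e 1" 0]
    by (auto simp: all_less_two sum_less_two x'_def e_def \<alpha>_def cd_utils_def)
  then show "x' \<in> CE_alloc 2 2 ((cd_utils 2 \<alpha>)(0 := cd_util 2 (bundle_of 1 0))) e"
    by (auto simp: CE_alloc_def)
  show "CE_alloc 2 2 (cd_utils 2 \<alpha>) e \<noteq> {}"
    using example_equilibrium_exists[OF a t] by (simp add: \<alpha>_def e_def)
  define D where "D = a * t + (1 - t)"
  have D: "0 < D" using a t by (simp add: D_def add_pos_pos)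
  assume "x \<in> CE_alloc 2 2 (cd_utils 2 \<alpha>) e"
  then obtain p where "comp_eq 2 2 (cd_utils 2 \<alpha>) e p x" by (auto simp: CE_alloc_def)
  then have "eq_bundle a 1 (1/2) t (x 0 0) (x 0 1)"
    using eq_bundle_of_comp_eq[of _ e p x 0, OF _ _ _ _ \<alpha>0 \<alpha>1 e_pos e_sum]
    by (simp add: cd_utils_def \<alpha>_def e_def)
  then have x0: "x 0 0 = a / (2 * D)" "x 0 (Suc 0) = 1"
    using a by (auto simp: eq_bundle_def cd_wealth_def cd_price0_def cd_price1_def D_def)
  have u: "cd_util 2 (\<alpha> 0) z = z 0 powr a * z (Suc 0) powr (1 - a)" for z
    using a by (simp add: \<alpha>_def cd_util_eq_cd_util2[OF \<alpha>0] cd_util2_interior)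
  have R: "D / a = exp 1 - (exp 1 - 1) * t" by (simp add: D_def a_def field_simps)
  have x00: "0 < x 0 0" using x0 a D by simp
  have "cd_util 2 (\<alpha> 0) (x' 0) = (D / a * x 0 0) powr a"
    using a D by (simp add: u x'_def x0)
  also have "\<dots> = (D / a) powr a * cd_util 2 (\<alpha> 0) (x 0)"
    using a D x00 powr_mult[of "D / a" "x 0 0" a] by (simp add: u x0(2))
  finally show "0 < cd_util 2 (\<alpha> 0) (x 0) \<and>
      cd_util 2 (\<alpha> 0) (x' 0) = (exp 1 - (exp 1 - 1) * t) powr (1 / exp 1) * cd_util 2 (\<alpha> 0) (x 0)"
    unfolding a_def[symmetric] R[symmetric] using x00 by (simp add: u x0(2))
qed

lemma incentive_ratio_tight:
  fixes c :: real
  assumes "c < exp (1 / exp 1)"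
  shows "\<exists>\<alpha> e \<beta> x'. cd_economy 2 2 \<alpha> e \<and> cd_param 2 \<beta> \<and>
      x' \<in> CE_alloc 2 2 ((cd_utils 2 \<alpha>)(0 := cd_util 2 \<beta>)) e \<and> CE_alloc 2 2 (cd_utils 2 \<alpha>) e \<noteq> {} \<and>
      (\<forall>x \<in> CE_alloc 2 2 (cd_utils 2 \<alpha>) e. c * cd_util 2 (\<alpha> 0) (x 0) < cd_util 2 (\<alpha> 0) (x' 0))"
proof -
  obtain t where t: "0 < t" "t < 1" and c: "c < (exp 1 - (exp 1 - 1) * t) powr (1 / exp 1)"
    using exp_inv_e_approx[OF assms] by blast
  obtain \<alpha> e x' where "cd_economy 2 2 \<alpha> e"
    and "x' \<in> CE_alloc 2 2 ((cd_utils 2 \<alpha>)(0 := cd_util 2 (bundle_of 1 0))) e"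
    and "CE_alloc 2 2 (cd_utils 2 \<alpha>) e \<noteq> {}"
    and gain: "\<And>x. x \<in> CE_alloc 2 2 (cd_utils 2 \<alpha>) e \<Longrightarrow> 0 < cd_util 2 (\<alpha> 0) (x 0) \<and>
      cd_util 2 (\<alpha> 0) (x' 0) = (exp 1 - (exp 1 - 1) * t) powr (1 / exp 1) * cd_util 2 (\<alpha> 0) (x 0)"
    using misreport_gain_example[OF t] by blast
  moreover have "c * cd_util 2 (\<alpha> 0) (x 0) < cd_util 2 (\<alpha> 0) (x' 0)"
    if "x \<in> CE_alloc 2 2 (cd_utils 2 \<alpha>) e" for x
    using gain[OF that] c by (simp add: mult_strict_right_mono)
  moreover have "cd_param 2 (bundle_of 1 0)" by (simp add: cd_param_two)
  ultimately show ?thesis by blast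
qed

theorem proposition2:
  shows "(\<forall>\<alpha> e i \<beta> x' x. cd_economy 2 2 \<alpha> e \<and> i < 2 \<and> cd_param 2 \<beta> \<and>
            x' \<in> CE_alloc 2 2 ((cd_utils 2 \<alpha>)(i := cd_util 2 \<beta>)) e \<and>
            x \<in> CE_alloc 2 2 (cd_utils 2 \<alpha>) e \<longrightarrow>
            cd_util 2 (\<alpha> i) (x' i) \<le> exp (1 / exp 1) * cd_util 2 (\<alpha> i) (x i))
       \<and> (\<forall>c < exp (1 / exp 1). \<exists>\<alpha> e i \<beta> x'. cd_economy 2 2 \<alpha> e \<and> i < 2 \<and> cd_param 2 \<beta> \<and>
            x' \<in> CE_alloc 2 2 ((cd_utils 2 \<alpha>)(i := cd_util 2 \<beta>)) e \<and>
            CE_alloc 2 2 (cd_utils 2 \<alpha>) e \<noteq> {} \<and>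
            (\<forall>x \<in> CE_alloc 2 2 (cd_utils 2 \<alpha>) e.
               c * cd_util 2 (\<alpha> i) (x i) < cd_util 2 (\<alpha> i) (x' i)))"
  using incentive_ratio_le incentive_ratio_tight by (metis pos2)

end
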